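(* Let $\frac12<\beta<\frac54$ and $\alpha+\beta=\frac54$, and let $r>\max(2\beta,2-\beta)$. Then there exists a constant $C>0$ such that for all $v,w$ for which the right-hand sides are finite, \[ |\langle B(\Lambda^{-2\alpha}w,v),\Lambda^{2r-2}v\rangle|\le C\big(\|w\|_{V^r}\|v\|_{V^{r-1}}+\|w\|_{V^{r+\beta-1}}\|v\|_{V^{r+\beta-1}}\big)\|v\|_{V^{r-1}} \] and \[ |\langle B(\Lambda^{-2\alpha}v,w),\Lambda^{2r-2}v\rangle|\le C\|v\|_{V^{r-1}}\|w\|_{V^{r+\beta-1}}\|v\|_{V^{r+\beta-1}}. \]
   Context: On the torus $\mathbb T=[0,2\pi]^3$, for $s\in\mathbb R$, $V^s$ is the space of real periodic vector fields $w=\sum_{k\in\mathbb Z^3\setminus\{0\}}w_ke^{ik\cdot x}$, $w_k\in\mathbb C^3$, $w_{-k}=\overline{w_k}$, $w_k\cdot k=0$ (divergence free, zero mean), with $\|w\|_{V^s}^2=\sum_k|w_k|^2|k|^{2s}<\infty$. $\Lambda^s$ is the Fourier multiplier by $|k|^s$. $B(u,v)=\Pi((u\cdot\nabla)v)$ with $\Pi$ the Leray projection, and $\langle B(u,v),z\rangle=\int_{\mathbb T}((u\cdot\nabla)v)\cdot z\,dx$ (for $z$ divergence free) denotes the $L^2$ pairing. *)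

theory Defs
  imports "HOL-Analysis.Analysis"
begin

text \<open>A (complex) periodic vector field on the 3-torus is represented by its Fourier
  coefficients: a map from wave vectors k in Z^3 to coefficients in C^3.\<close>
type_synonym field3 = "int ^ 3 \<Rightarrow> complex ^ 3"

definition knorm :: "int ^ 3 \<Rightarrow> real" where
  "knorm k = sqrt (\<Sum>i\<in>UNIV. (real_of_int (k $ i))\<^sup>2)"

definition cnorm2 :: "complex ^ 3 \<Rightarrow> real" where
  "cnorm2 a = (\<Sum>i\<in>UNIV. (cmod (a $ i))\<^sup>2)"

text \<open>Real, divergence free, zero mean.\<close>
definition dfield :: "field3 \<Rightarrow> bool" where
  "dfield w \<longleftrightarrow> w 0 = 0
     \<and> (\<forall>k. w (- k) = (\<chi> i. cnj (w k $ i)))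
     \<and> (\<forall>k. (\<Sum>i\<in>UNIV. w k $ i * of_int (k $ i)) = 0)"

definition finV :: "real \<Rightarrow> field3 \<Rightarrow> bool" where
  "finV s w \<longleftrightarrow> (\<lambda>k. cnorm2 (w k) * knorm k powr (2 * s)) summable_on UNIV"

definition Vnorm :: "real \<Rightarrow> field3 \<Rightarrow> real" where
  "Vnorm s w = sqrt (\<Sum>\<^sub>\<infinity>k. cnorm2 (w k) * knorm k powr (2 * s))"

text \<open>Fourier multiplier by |k|^s (the k = 0 coefficient is 0 for our fields).\<close>
definition Lam :: "real \<Rightarrow> field3 \<Rightarrow> field3" where
  "Lam s w = (\<lambda>k. (knorm k powr s) *\<^sub>R w k)"

text \<open>L^2 pairing \<langle>B(u,v),z\<rangle> = \<integral> ((u\<cdot>\<nabla>)v)\<cdot>z dx over [0,2\<pi>]^3, written in Fourier variables: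
  (2\<pi>)^3 \<Sum>_{j+l+m=0} (u_j \<cdot> i l)(v_l \<cdot> z_m).\<close>
definition Bpair :: "field3 \<Rightarrow> field3 \<Rightarrow> field3 \<Rightarrow> complex" where
  "Bpair u v z = complex_of_real ((2 * pi) ^ 3) *
     (\<Sum>\<^sub>\<infinity>(j, l) \<in> UNIV.
        (\<Sum>a\<in>UNIV. u j $ a * \<i> * of_int (l $ a)) * (\<Sum>b\<in>UNIV. v l $ b * z (- (j + l)) $ b))"

end

theory Submission
  imports Defs
begin

text \<open>The trilinear form is a sum over triads
  (j, l, -(j + l)) of modes; bounding each coefficient by its modulus turns every term into a
  product of powers |k|^a and of the square-summable sequences |k|^s |v_k|. Such convolution sums
  are bounded by Cauchy-Schwarz, and the remaining powers |k|^{-e} are square summable over Z^3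
  for e > 3/2, which is what the hypotheses on \<beta> and r provide. In the first estimate the weight
  |j + l|^{2r-2} is too large to be distributed directly. Since the advecting field is divergence
  free, the part |l|^{r-1} |j + l|^{r-1} of it is odd under l \<mapsto> -(j + l) and cancels, and the
  remaining commutator |j + l|^{r-1} - |l|^{r-1} gains a factor |j| / |l| by the mean value
  theorem.\<close>

section \<open>Square-summable families\<close>

definition square_summable :: "('a \<Rightarrow> real) \<Rightarrow> bool" where
  "square_summable f \<longleftrightarrow> (\<lambda>k. (f k)\<^sup>2) summable_on UNIV"

definition l2_norm :: "('a \<Rightarrow> real) \<Rightarrow> real" where
  "l2_norm f = sqrt (\<Sum>\<^sub>\<infinity>k. (f k)\<^sup>2)"

lemma l2_norm_nonneg: "l2_norm f \<ge> 0"
  by (simp add: l2_norm_def infsum_nonneg)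

lemma L2_set_le_l2_norm:
  assumes "square_summable f" "finite A"
  shows "L2_set f A \<le> l2_norm f"
  unfolding L2_set_def l2_norm_def
  by (rule real_sqrt_le_mono, rule finite_sum_le_infsum)
    (use assms in \<open>auto simp: square_summable_def\<close>)

lemma sum_abs_mult_le_l2_norm:
  assumes "square_summable f" "square_summable g" "finite A"
  shows "(\<Sum>i\<in>A. \<bar>f i\<bar> * \<bar>g i\<bar>) \<le> l2_norm f * l2_norm g"
  by (rule order.trans[OF L2_set_mult_ineq], rule mult_mono)
    (use L2_set_le_l2_norm assms in \<open>auto simp: L2_set_nonneg l2_norm_nonneg\<close>)

lemma summable_on_if_finite_sums_le:
  fixes f :: "'a \<Rightarrow> real"
  assumes "\<And>x. f x \<ge> 0" "\<And>F. finite F \<Longrightarrow> sum f F \<le> B"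
  shows "f summable_on UNIV"
  by (rule nonneg_bdd_above_summable_on) (use assms in \<open>auto intro!: bdd_aboveI\<close>)

lemma norm_infsum_le_if_finite_sums_le:
  fixes f :: "'a \<Rightarrow> 'b::banach"
  assumes "\<And>F. finite F \<Longrightarrow> (\<Sum>x\<in>F. norm (f x)) \<le> B"
  shows "norm (infsum f UNIV) \<le> B"
proof -
  have abs: "(\<lambda>x. norm (f x)) summable_on UNIV"
    by (rule summable_on_if_finite_sums_le) (use assms in auto)
  have "norm (infsum f UNIV) \<le> (\<Sum>\<^sub>\<infinity>x. norm (f x))"
    by (rule norm_infsum_bound) (use abs in simp)
  also have "\<dots> \<le> B"
    by (rule infsum_le_finite_sums[OF abs]) (use assms in simp)
  finally show ?thesis .
qed

text \<open>No summability hypothesis is needed: reindexing by a bijection preserves infsum either way.\<close>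
lemma infsum_eq_0_if_involution_negates:
  fixes f :: "'a \<Rightarrow> 'b::real_normed_vector"
  assumes "\<And>p. \<sigma> (\<sigma> p) = p" "\<And>p. f (\<sigma> p) = - f p"
  shows "infsum f UNIV = 0"
proof -
  have "infsum (\<lambda>p. f (\<sigma> p)) UNIV = infsum f UNIV"
    by (rule infsum_reindex_bij_witness[of UNIV \<sigma> \<sigma>]) (simp_all add: assms(1))
  then have "infsum f UNIV = - infsum f UNIV" by (simp add: assms(2) infsum_uminus)
  then have "(2::real) *\<^sub>R infsum f UNIV = 0" by (metis add.right_inverse scaleR_2)
  then show ?thesis by simp
qed

lemma sum_convolution_le:
  fixes a g h :: "'a::ab_group_add \<Rightarrow> real"
  assumes nonneg: "\<And>k. a k \<ge> 0" "\<And>k. g k \<ge> 0" "\<And>k. h k \<ge> 0"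
    and "square_summable g" "square_summable h"
    and a_le: "\<And>J. finite J \<Longrightarrow> sum a J \<le> A" and "finite F"
  shows "(\<Sum>(j, l)\<in>F. a j * g l * h (j + l)) \<le> A * l2_norm g * l2_norm h"
proof -
  define J L where "J = fst ` F" and "L = snd ` F"
  have fin: "finite J" "finite L" using \<open>finite F\<close> by (auto simp: J_def L_def)
  have "(\<Sum>(j, l)\<in>F. a j * g l * h (j + l)) \<le> (\<Sum>(j, l)\<in>J \<times> L. a j * g l * h (j + l))"
    by (rule sum_mono2) (use fin nonneg in \<open>force simp: J_def L_def\<close>)+
  also have "\<dots> = (\<Sum>j\<in>J. a j * (\<Sum>l\<in>L. g l * h (j + l)))"
    by (simp add: sum.cartesian_product[symmetric] sum_distrib_left mult.assoc)
  also have "\<dots> \<le> (\<Sum>j\<in>J. a j * (l2_norm g * l2_norm h))"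
  proof (intro sum_mono mult_left_mono)
    fix j
    have "(\<Sum>l\<in>L. (h (j + l))\<^sup>2) = (\<Sum>k\<in>(+) j ` L. (h k)\<^sup>2)"
      by (subst sum.reindex) (auto simp: inj_on_def)
    then have "L2_set (\<lambda>l. h (j + l)) L \<le> l2_norm h"
      using L2_set_le_l2_norm[OF assms(5)] fin by (simp add: L2_set_def)
    moreover have "(\<Sum>l\<in>L. g l * h (j + l)) \<le> L2_set g L * L2_set (\<lambda>l. h (j + l)) L"
      using L2_set_mult_ineq[of g "\<lambda>l. h (j + l)" L] nonneg by simp
    ultimately show "(\<Sum>l\<in>L. g l * h (j + l)) \<le> l2_norm g * l2_norm h"
      using L2_set_le_l2_norm[OF assms(4) fin(2)]
      by (meson L2_set_nonneg mult_mono order.trans)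
  qed (use nonneg in simp)
  also have "\<dots> = sum a J * (l2_norm g * l2_norm h)"
    by (simp add: sum_distrib_right)
  also have "\<dots> \<le> A * (l2_norm g * l2_norm h)"
    by (intro mult_right_mono a_le fin) (simp add: l2_norm_nonneg)
  finally show ?thesis by (simp add: mult.assoc)
qed

lemma sum_convolution_le_l2_norms:
  fixes W f g h :: "'a::ab_group_add \<Rightarrow> real"
  assumes "\<And>k. W k \<ge> 0" "\<And>k. f k \<ge> 0" "\<And>k. g k \<ge> 0" "\<And>k. h k \<ge> 0"
    and "square_summable W" "square_summable f" "square_summable g" "square_summable h"
    and "finite F"
  shows "(\<Sum>(j, l)\<in>F. W j * f j * g l * h (j + l)) \<le> l2_norm W * l2_norm f * l2_norm g * l2_norm h"
  using sum_convolution_le[of "\<lambda>j. W j * f j" g h "l2_norm W * l2_norm f" F]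
    sum_abs_mult_le_l2_norm[of W f] assms by (simp add: mult.assoc)

lemma sum_convolution_le_l2_norms':
  fixes W f g h :: "'a::ab_group_add \<Rightarrow> real"
  assumes "\<And>k. W k \<ge> 0" "\<And>k. f k \<ge> 0" "\<And>k. g k \<ge> 0" "\<And>k. h k \<ge> 0"
    and "square_summable W" "square_summable f" "square_summable g" "square_summable h"
    and "finite F"
  shows "(\<Sum>(j, l)\<in>F. f j * W l * g l * h (j + l)) \<le> l2_norm W * l2_norm f * l2_norm g * l2_norm h"
proof -
  have "(\<Sum>(j, l)\<in>F. f j * W l * g l * h (j + l)) = (\<Sum>(l, j)\<in>prod.swap ` F. W l * g l * f j * h (l + j))"
    by (subst sum.reindex) (auto simp: inj_on_def add.commute mult_ac intro!: sum.cong)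
  also have "\<dots> \<le> l2_norm W * l2_norm g * l2_norm f * l2_norm h"
    by (rule sum_convolution_le_l2_norms) (use assms in auto)
  finally show ?thesis by (simp add: mult_ac)
qed

section \<open>The lattice Z^3\<close>

definition kvec :: "int ^ 3 \<Rightarrow> complex ^ 3" where
  "kvec k = (\<chi> i. of_int (k $ i))"

lemma knorm_eq_norm_kvec: "knorm k = norm (kvec k)"
  by (simp add: knorm_def kvec_def norm_vec_def L2_set_def)

lemma kvec_add: "kvec (j + l) = kvec j + kvec l"
  by (simp add: kvec_def vec_eq_iff)

lemma kvec_uminus: "kvec (- k) = - kvec k"
  by (simp add: kvec_def vec_eq_iff)

lemma knorm_nonneg [simp]: "knorm k \<ge> 0"
  by (simp add: knorm_eq_norm_kvec)

lemma knorm_eq_0_iff [simp]: "knorm k = 0 \<longleftrightarrow> k = 0"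
  by (simp add: knorm_eq_norm_kvec kvec_def vec_eq_iff)

lemma knorm_pos_iff [simp]: "0 < knorm k \<longleftrightarrow> k \<noteq> 0"
  using knorm_nonneg[of k] knorm_eq_0_iff[of k] by linarith

lemma knorm_zero [simp]: "knorm 0 = 0"
  by simp

lemma knorm_uminus [simp]: "knorm (- k) = knorm k"
  by (simp add: knorm_eq_norm_kvec kvec_uminus)

lemma knorm_triangle: "knorm (j + l) \<le> knorm j + knorm l"
  by (simp add: knorm_eq_norm_kvec kvec_add norm_triangle_ineq)

lemma knorm_triangle': "knorm l \<le> knorm j + knorm (j + l)"
  using knorm_triangle[of "- j" "j + l"] by simp

lemma knorm_squared: "(knorm k)\<^sup>2 = (\<Sum>i\<in>UNIV. (real_of_int (k $ i))\<^sup>2)"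
  by (simp add: knorm_def sum_nonneg)

lemma one_le_knorm_squared:
  assumes "k \<noteq> 0"
  shows "1 \<le> (knorm k)\<^sup>2"
proof -
  obtain i where "k $ i \<noteq> 0" using assms by (auto simp: vec_eq_iff)
  then have "1 \<le> \<bar>real_of_int (k $ i)\<bar>" by linarith
  then have "1 \<le> (real_of_int (k $ i))\<^sup>2"
    by (metis abs_le_square_iff abs_one one_power2)
  also have "\<dots> \<le> (\<Sum>i\<in>UNIV. (real_of_int (k $ i))\<^sup>2)"
    by (rule member_le_sum) auto
  finally show ?thesis by (simp add: knorm_squared)
qed

lemma power2_powr: "0 \<le> x \<Longrightarrow> (x\<^sup>2) powr a = x powr (2 * a)"
  for x a :: real
proof -
  assume "0 \<le> x"
  then have "x\<^sup>2 = x powr 2" by simp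
  then show ?thesis by (simp only: powr_powr)
qed

lemma summable_one_plus_square_powr:
  fixes c :: real
  assumes "c > 1/2"
  shows "summable (\<lambda>m::nat. (1 + (real m)\<^sup>2) powr - c)"
proof (rule summable_comparison_test')
  show "summable (\<lambda>m::nat. real m powr (- 2 * c))"
    using assms by (subst summable_real_powr_iff) auto
  show "norm ((1 + (real m)\<^sup>2) powr - c) \<le> real m powr (- 2 * c)" if "m \<ge> 1" for m
  proof -
    have "(1 + (real m)\<^sup>2) powr - c \<le> ((real m)\<^sup>2) powr - c"
      by (rule powr_mono2') (use assms that in auto)
    also have "\<dots> = real m powr (- 2 * c)"
      by (simp add: power2_powr)
    finally show ?thesis by simp
  qed
qed

lemma sum_int_one_plus_square_powr_le:
  fixes c :: real
  assumes "c > 1/2" and "finite N"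
  shows "(\<Sum>n\<in>N. (1 + (real_of_int n)\<^sup>2) powr - c) \<le> 2 * (\<Sum>m. (1 + (real m)\<^sup>2) powr - c)"
proof -
  define G where "G m = (1 + (real m)\<^sup>2) powr - c" for m :: nat
  have half_le: "(\<Sum>n\<in>P. G (nat \<bar>n\<bar>)) \<le> (\<Sum>m. G m)"
    if "finite P" "inj_on (\<lambda>n. nat \<bar>n\<bar>) P" for P
  proof -
    have "(\<Sum>n\<in>P. G (nat \<bar>n\<bar>)) = (\<Sum>m\<in>(\<lambda>n. nat \<bar>n\<bar>) ` P. G m)"
      by (simp add: sum.reindex[OF that(2)])
    also have "\<dots> \<le> (\<Sum>m. G m)"
      by (rule sum_le_suminf)
        (use summable_one_plus_square_powr[OF assms(1)] that(1) in \<open>simp_all add: G_def\<close>)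
    finally show ?thesis .
  qed
  have "(\<Sum>n\<in>N. G (nat \<bar>n\<bar>)) = (\<Sum>n\<in>{n \<in> N. 0 \<le> n} \<union> {n \<in> N. n < 0}. G (nat \<bar>n\<bar>))"
    by (rule sum.cong) auto
  also have "\<dots> = (\<Sum>n\<in>{n \<in> N. 0 \<le> n}. G (nat \<bar>n\<bar>)) + (\<Sum>n\<in>{n \<in> N. n < 0}. G (nat \<bar>n\<bar>))"
    by (rule sum.union_disjoint) (use assms(2) in auto)
  also have "\<dots> \<le> (\<Sum>m. G m) + (\<Sum>m. G m)"
    by (intro add_mono half_le) (use assms(2) in \<open>auto simp: inj_on_def\<close>)
  finally show ?thesis by (simp add: G_def)
qed

text \<open>Bounding the radial weight by a product of one-dimensional weights makes the lattice
  sum factorise.\<close>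
lemma knorm_powr_le_prod:
  fixes q :: real
  assumes "q > 3"
  shows "knorm k powr - q \<le> 2 powr (q/2) *
    ((1 + (real_of_int (k$1))\<^sup>2) powr - (q/6) * (1 + (real_of_int (k$2))\<^sup>2) powr - (q/6)
     * (1 + (real_of_int (k$3))\<^sup>2) powr - (q/6))"
proof (cases "k = 0")
  case False
  define N2 where "N2 = (knorm k)\<^sup>2"
  define P where "P = (1 + (real_of_int (k$1))\<^sup>2) * (1 + (real_of_int (k$2))\<^sup>2) * (1 + (real_of_int (k$3))\<^sup>2)"
  have N2: "N2 \<ge> 1" using one_le_knorm_squared[OF False] by (simp add: N2_def)
  have N2_sum: "N2 = (real_of_int (k$1))\<^sup>2 + (real_of_int (k$2))\<^sup>2 + (real_of_int (k$3))\<^sup>2"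
    by (simp add: N2_def knorm_squared sum_3)
  have "P \<le> (1 + N2) * (1 + N2) * (1 + N2)"
    unfolding P_def by (intro mult_mono) (auto simp: N2_sum add_nonneg_nonneg)
  also have "\<dots> \<le> (2 * N2) ^ 3"
    using power_mono[of "1 + N2" "2 * N2" 3] N2 by (simp add: power3_eq_cube)
  finally have "P \<le> (2 * N2) ^ 3" .
  then have "((2 * N2) ^ 3) powr - (q/6) \<le> P powr - (q/6)"
    by (intro powr_mono2') (use assms in \<open>auto simp: P_def add_pos_nonneg\<close>)
  moreover have "((2 * N2) ^ 3) powr - (q/6) = 2 powr - (q/2) * knorm k powr - q"
  proof -
    have "((2 * N2) ^ 3) powr - (q/6) = ((2 * N2) powr 3) powr - (q/6)"
      using N2 by simp
    also have "\<dots> = (2 * N2) powr - (q/2)"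
      by (simp only: powr_powr) simp
    also have "\<dots> = 2 powr - (q/2) * N2 powr - (q/2)"
      using N2 by (simp add: powr_mult)
    also have "N2 powr - (q/2) = knorm k powr - q"
      by (simp add: N2_def power2_powr)
    finally show ?thesis .
  qed
  ultimately have "2 powr - (q/2) * knorm k powr - q \<le> P powr - (q/6)"
    by simp
  then have "2 powr (q/2) * (2 powr - (q/2) * knorm k powr - q) \<le> 2 powr (q/2) * P powr - (q/6)"
    by (rule mult_left_mono) simp
  then have "knorm k powr - q \<le> 2 powr (q/2) * P powr - (q/6)"
    by (simp add: mult.assoc[symmetric] powr_add[symmetric])
  also have "P powr - (q/6) = (1 + (real_of_int (k$1))\<^sup>2) powr - (q/6)
      * (1 + (real_of_int (k$2))\<^sup>2) powr - (q/6) * (1 + (real_of_int (k$3))\<^sup>2) powr - (q/6)"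
    by (simp add: P_def powr_mult)
  finally show ?thesis .
qed simp

lemma summable_on_knorm_powr:
  fixes q :: real
  assumes "q > 3"
  shows "(\<lambda>k::int ^ 3. knorm k powr - q) summable_on UNIV"
proof (rule summable_on_if_finite_sums_le)
  define g where "g n = (1 + (real_of_int n)\<^sup>2) powr - (q/6)" for n :: int
  define S where "S = 2 * (\<Sum>m. (1 + (real m)\<^sup>2) powr - (q/6))"
  have g_le: "sum g A \<le> S" if "finite A" for A
    using sum_int_one_plus_square_powr_le[OF _ that, of "q/6"] assms by (simp add: g_def S_def)
  have g_nonneg: "g n \<ge> 0" for n by (simp add: g_def)
  have "S \<ge> 0" using g_le[of "{}"] by simp
  fix F :: "(int ^ 3) set" assume "finite F"
  define A1 A2 A3 where "A1 = (\<lambda>k. k$1) ` F" and "A2 = (\<lambda>k. k$2) ` F" and "A3 = (\<lambda>k. k$3) ` F"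
  have fin: "finite A1" "finite A2" "finite A3" using \<open>finite F\<close> by (auto simp: A1_def A2_def A3_def)
  have inj: "inj_on (\<lambda>k. (k$1, k$2, k$3)) F"
    by (auto simp: inj_on_def vec_eq_iff forall_3)
  have "(\<Sum>k\<in>F. knorm k powr - q) \<le> 2 powr (q/2) * (\<Sum>k\<in>F. g (k$1) * g (k$2) * g (k$3))"
    unfolding sum_distrib_left by (rule sum_mono) (use knorm_powr_le_prod[OF assms] in \<open>simp add: g_def\<close>)
  also have "(\<Sum>k\<in>F. g (k$1) * g (k$2) * g (k$3)) = (\<Sum>(a, b, c)\<in>(\<lambda>k. (k$1, k$2, k$3)) ` F. g a * g b * g c)"
    by (simp add: sum.reindex[OF inj])
  also have "\<dots> \<le> (\<Sum>(a, b, c)\<in>A1 \<times> A2 \<times> A3. g a * g b * g c)"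
    by (rule sum_mono2) (use fin in \<open>auto simp: A1_def A2_def A3_def g_nonneg\<close>)
  also have "\<dots> = (\<Sum>a\<in>A1. g a * (\<Sum>b\<in>A2. g b * (\<Sum>c\<in>A3. g c)))"
    by (simp add: sum.cartesian_product[symmetric] sum_distrib_left mult.assoc)
  also have "\<dots> = sum g A1 * sum g A2 * sum g A3"
    by (simp add: sum_distrib_right mult.assoc)
  also have "\<dots> \<le> S * S * S"
    by (intro mult_mono g_le fin) (auto intro!: sum_nonneg mult_nonneg_nonneg g_nonneg \<open>S \<ge> 0\<close>)
  finally show "(\<Sum>k\<in>F. knorm k powr - q) \<le> 2 powr (q/2) * (S * S * S)"
    by (simp add: mult_left_mono)
qed simp

lemma square_summable_knorm_powr:
  fixes e :: real
  assumes "e > 3/2"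
  shows "square_summable (\<lambda>k. knorm k powr - e)"
proof -
  have "(knorm k powr - e)\<^sup>2 = knorm k powr - (2 * e)" for k
    by (simp add: power2_eq_square powr_add[symmetric])
  then show ?thesis
    using summable_on_knorm_powr[of "2 * e"] assms by (simp add: square_summable_def)
qed

section \<open>Fourier coefficients of fields\<close>

definition cdot :: "complex ^ 3 \<Rightarrow> complex ^ 3 \<Rightarrow> complex" where
  "cdot a b = (\<Sum>i\<in>UNIV. a $ i * b $ i)"

lemma norm_cdot_le: "cmod (cdot a b) \<le> norm a * norm b"
proof -
  have "cmod (cdot a b) \<le> (\<Sum>i\<in>UNIV. \<bar>cmod (a $ i)\<bar> * \<bar>cmod (b $ i)\<bar>)"
    unfolding cdot_def by (rule order.trans[OF norm_sum]) (simp add: norm_mult)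
  also have "\<dots> \<le> norm a * norm b"
    unfolding norm_vec_def by (rule L2_set_mult_ineq)
  finally show ?thesis .
qed

lemma cdot_commute: "cdot a b = cdot b a"
  by (simp add: cdot_def mult.commute)

lemma cdot_add_right: "cdot a (b + c) = cdot a b + cdot a c"
  by (simp add: cdot_def distrib_left sum.distrib)

lemma cdot_uminus_right: "cdot a (- b) = - cdot a b"
  by (simp add: cdot_def sum_negf)

lemma cdot_scaleR_left: "cdot (r *\<^sub>R a) b = of_real r * cdot a b"
  by (simp add: cdot_def sum_distrib_left vector_scaleR_component) (simp add: scaleR_conv_of_real mult_ac)

lemma cdot_scaleR_right: "cdot a (r *\<^sub>R b) = of_real r * cdot a b"
  by (simp add: cdot_def sum_distrib_left vector_scaleR_component) (simp add: scaleR_conv_of_real mult_ac)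

lemma cnorm2_eq_norm_squared: "cnorm2 a = (norm a)\<^sup>2"
  by (simp add: cnorm2_def norm_vec_def L2_set_def sum_nonneg)

lemma norm_Lam: "norm (Lam s w k) = knorm k powr s * norm (w k)"
  by (simp add: Lam_def)

lemma dfield_zero: "dfield w \<Longrightarrow> w 0 = 0"
  by (simp add: dfield_def)

lemma dfield_norm_uminus: "dfield w \<Longrightarrow> norm (w (- k)) = norm (w k)"
  by (simp add: dfield_def norm_vec_def)

lemma dfield_cdot_kvec: "dfield w \<Longrightarrow> cdot (w k) (kvec k) = 0"
  by (simp add: dfield_def cdot_def kvec_def)

lemma dfield_Lam:
  assumes "dfield w"
  shows "dfield (Lam s w)"
proof -
  have "cdot (Lam s w k) (kvec k) = 0" for k
    by (simp add: Lam_def cdot_scaleR_left dfield_cdot_kvec[OF assms])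
  then show ?thesis
    using assms by (auto simp: dfield_def Lam_def vec_eq_iff vector_scaleR_component cdot_def kvec_def)
qed

definition Vseq :: "real \<Rightarrow> field3 \<Rightarrow> int ^ 3 \<Rightarrow> real" where
  "Vseq s w k = knorm k powr s * norm (w k)"

lemma Vseq_nonneg [simp]: "Vseq s w k \<ge> 0"
  by (simp add: Vseq_def)

lemma Vseq_squared: "(Vseq s w k)\<^sup>2 = cnorm2 (w k) * knorm k powr (2 * s)"
  by (simp add: Vseq_def cnorm2_eq_norm_squared power_mult_distrib power2_eq_square powr_add[symmetric])

lemma finV_iff_square_summable: "finV s w \<longleftrightarrow> square_summable (Vseq s w)"
  by (simp add: finV_def square_summable_def Vseq_squared)

lemma Vnorm_eq_l2_norm: "Vnorm s w = l2_norm (Vseq s w)"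
  by (simp add: Vnorm_def l2_norm_def Vseq_squared)

definition Btriad :: "field3 \<Rightarrow> field3 \<Rightarrow> field3 \<Rightarrow> (int ^ 3) \<times> (int ^ 3) \<Rightarrow> complex" where
  "Btriad u v z = (\<lambda>(j, l). \<i> * cdot (u j) (kvec l) * cdot (v l) (z (- (j + l))))"

lemma Bpair_eq_infsum_Btriad: "Bpair u v z = of_real ((2 * pi) ^ 3) * infsum (Btriad u v z) UNIV"
proof -
  have "(\<lambda>(j, l). (\<Sum>a\<in>UNIV. u j $ a * \<i> * of_int (l $ a)) * (\<Sum>b\<in>UNIV. v l $ b * z (- (j + l)) $ b))
      = Btriad u v z"
    by (auto simp: Btriad_def cdot_def kvec_def sum_distrib_left mult_ac)
  then show ?thesis by (simp add: Bpair_def)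
qed

lemma Btriad_Lam_right:
  "Btriad u v (Lam s z) (j, l) = of_real (knorm (j + l) powr s) * Btriad u v z (j, l)"
  by (simp add: Btriad_def Lam_def cdot_scaleR_right knorm_uminus[of "j + l", simplified])

lemma Btriad_antisym:
  assumes "dfield u"
  shows "Btriad u v v (j, - (j + l)) = - Btriad u v v (j, l)"
proof -
  have "cdot (u j) (kvec (- (j + l))) = - cdot (u j) (kvec l)"
    by (simp only: kvec_uminus kvec_add cdot_uminus_right cdot_add_right dfield_cdot_kvec[OF assms]) simp
  moreover have "j + - (j + l) = - l" by simp
  ultimately show ?thesis by (simp add: Btriad_def cdot_commute)
qed

lemma norm_Btriad_le:
  "cmod (Btriad u v z (j, l)) \<le> norm (u j) * knorm l * norm (v l) * norm (z (- (j + l)))"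
proof -
  have "cmod (Btriad u v z (j, l)) = cmod (cdot (u j) (kvec l)) * cmod (cdot (v l) (z (- (j + l))))"
    by (simp add: Btriad_def norm_mult)
  also have "\<dots> \<le> (norm (u j) * knorm l) * (norm (v l) * norm (z (- (j + l))))"
    by (intro mult_mono norm_cdot_le) (simp_all add: knorm_eq_norm_kvec norm_cdot_le)
  finally show ?thesis by (simp add: mult.assoc)
qed

text \<open>For divergence free u, the derivative may be moved from the mode l to the mode j + l.\<close>
lemma norm_Btriad_le_dfield:
  assumes "dfield u"
  shows "cmod (Btriad u v z (j, l)) \<le> norm (u j) * knorm (j + l) * norm (v l) * norm (z (- (j + l)))"
proof -
  have "cdot (u j) (kvec l) = cdot (u j) (kvec (j + l))"
    by (simp add: kvec_add cdot_add_right dfield_cdot_kvec[OF assms])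
  then have "Btriad u v z (j, l) = \<i> * cdot (u j) (kvec (j + l)) * cdot (v l) (z (- (j + l)))"
    by (simp add: Btriad_def)
  then have "cmod (Btriad u v z (j, l)) = cmod (cdot (u j) (kvec (j + l))) * cmod (cdot (v l) (z (- (j + l))))"
    by (simp add: norm_mult)
  also have "\<dots> \<le> (norm (u j) * knorm (j + l)) * (norm (v l) * norm (z (- (j + l))))"
    by (intro mult_mono norm_cdot_le) (simp_all add: knorm_eq_norm_kvec norm_cdot_le)
  finally show ?thesis by (simp add: mult.assoc)
qed

section \<open>Estimates of the symbols\<close>

lemma powr_diff_le_mean_value:
  fixes a b s :: real
  assumes "0 < a" "a < b" "0 < s"
  shows "b powr s - a powr s \<le> s * (b - a) * (a powr (s - 1) + b powr (s - 1))"
proof -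
  have "((\<lambda>z. z powr s) has_real_derivative s * x powr (s - 1)) (at x)" if "a \<le> x" "x \<le> b" for x
    using assms that by (intro has_real_derivative_powr) auto
  from MVT2[OF assms(2) this]
  obtain z where z: "a < z" "z < b" "b powr s - a powr s = (b - a) * (s * z powr (s - 1))"
    by blast
  have "z powr (s - 1) \<le> a powr (s - 1) + b powr (s - 1)"
  proof (cases "s - 1 \<ge> 0")
    case True
    then have "z powr (s - 1) \<le> b powr (s - 1)" by (intro powr_mono2) (use z assms in auto)
    then show ?thesis using powr_ge_zero[of a "s - 1"] by linarith
  next
    case False
    then have "z powr (s - 1) \<le> a powr (s - 1)" by (intro powr_mono2') (use z assms in auto)
    then show ?thesis using powr_ge_zero[of b "s - 1"] by linarith
  qed
  then have "(b - a) * s * z powr (s - 1) \<le> (b - a) * s * (a powr (s - 1) + b powr (s - 1))"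
    by (intro mult_left_mono) (use assms in auto)
  then show ?thesis using z(3) by (simp add: mult_ac)
qed

lemma abs_powr_diff_le:
  fixes x y s :: real
  assumes "0 < x" "0 < y" "0 < s"
  shows "\<bar>x powr s - y powr s\<bar> \<le> s * \<bar>x - y\<bar> * (x powr (s - 1) + y powr (s - 1))"
proof (cases x y rule: linorder_cases)
  case less
  then have "y powr s - x powr s \<le> s * (y - x) * (x powr (s - 1) + y powr (s - 1))"
    using powr_diff_le_mean_value[of x y s] assms by auto
  moreover have "x powr s \<le> y powr s" using less assms by (intro powr_mono2) auto
  ultimately show ?thesis using less by (simp add: abs_if)
next
  case greater
  then have "x powr s - y powr s \<le> s * (x - y) * (y powr (s - 1) + x powr (s - 1))"
    using powr_diff_le_mean_value[of y x s] assms by auto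
  moreover have "y powr s \<le> x powr s" using greater assms by (intro powr_mono2) auto
  ultimately show ?thesis using greater by (simp add: abs_if add.commute)
qed simp

lemma powr_le_two_powr_abs_mult:
  fixes x y q :: real
  assumes "0 < y" "y / 2 \<le> x" "x \<le> 2 * y"
  shows "x powr q \<le> 2 powr \<bar>q\<bar> * y powr q"
proof (cases "q \<ge> 0")
  case True
  then have "x powr q \<le> (2 * y) powr q" by (intro powr_mono2) (use assms in auto)
  also have "\<dots> = 2 powr \<bar>q\<bar> * y powr q" using True assms by (simp add: powr_mult)
  finally show ?thesis .
next
  case False
  then have "x powr q \<le> (y / 2) powr q" by (intro powr_mono2') (use assms in auto)
  also have "\<dots> = y powr q / 2 powr q" using assms by (simp add: powr_divide)
  also have "\<dots> = 2 powr (- q) * y powr q" by (simp add: powr_minus divide_inverse)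
  also have "\<dots> = 2 powr \<bar>q\<bar> * y powr q" using False by simp
  finally show ?thesis .
qed

text \<open>Here t = |j|, y = |l|, x = |j + l|. If y \<ge> 2t, the mean value theorem gives
  |x^s - y^s| \<le> C t y^{s-1}; otherwise x and y are bounded by multiples of t.\<close>
lemma commutator_kernel_le:
  fixes t y x s \<beta> :: real
  assumes "0 \<le> t" "0 \<le> y" "0 \<le> x" "x \<le> t + y" "y \<le> t + x"
    and "0 < s" "1/2 < \<beta>" "\<beta> < 3/2"
  shows "t powr (2 * \<beta> - 5/2) * y * \<bar>x powr s - y powr s\<bar>
    \<le> s * (2 powr \<bar>s - 1\<bar> + 1) * t powr (2 * \<beta> - 3/2) * y powr s
      + (3 powr s + 2 powr s) * 2 powr (5/2 - \<beta>) * t powr (s + \<beta>) * y powr (\<beta> - 3/2)"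
    (is "?L \<le> ?A + ?B")
proof -
  have "?A \<ge> 0" "?B \<ge> 0" using assms by simp_all
  consider "t = 0 \<or> y = 0" | "0 < t" "0 < y" "2 * t \<le> y" | "0 < t" "0 < y" "y < 2 * t"
    using assms by linarith
  then show ?thesis
  proof cases
    case 1
    then show ?thesis using \<open>?A \<ge> 0\<close> \<open>?B \<ge> 0\<close> by auto
  next
    case 2
    have "x > 0" "\<bar>x - y\<bar> \<le> t" using 2 assms by auto
    have "\<bar>x powr s - y powr s\<bar> \<le> s * \<bar>x - y\<bar> * (x powr (s - 1) + y powr (s - 1))"
      by (rule abs_powr_diff_le) (use 2 assms \<open>x > 0\<close> in auto)
    also have "\<dots> \<le> s * t * (2 powr \<bar>s - 1\<bar> * y powr (s - 1) + y powr (s - 1))"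
      by (intro mult_mono add_mono powr_le_two_powr_abs_mult)
        (use 2 assms \<open>\<bar>x - y\<bar> \<le> t\<close> in auto)
    also have "\<dots> = s * (2 powr \<bar>s - 1\<bar> + 1) * t * y powr (s - 1)"
      by (simp add: algebra_simps)
    finally have "?L \<le> t powr (2 * \<beta> - 5/2) * y * (s * (2 powr \<bar>s - 1\<bar> + 1) * t * y powr (s - 1))"
      by (rule mult_left_mono) (use assms in simp)
    also have "\<dots> = s * (2 powr \<bar>s - 1\<bar> + 1) * (t * t powr (2 * \<beta> - 5/2)) * (y * y powr (s - 1))"
      by (simp only: mult_ac)
    also have "\<dots> = ?A"
      using 2 by (simp add: powr_mult_base)
    finally show ?thesis using \<open>?B \<ge> 0\<close> by linarith
  next
    case 3
    have "\<bar>x powr s - y powr s\<bar> \<le> x powr s + y powr s"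
      by (simp add: abs_le_iff)
    also have "\<dots> \<le> (3 * t) powr s + (2 * t) powr s"
      using 3 assms by (intro add_mono powr_mono2) auto
    also have "\<dots> = (3 powr s + 2 powr s) * t powr s"
      using 3 by (simp add: powr_mult distrib_right)
    finally have D: "\<bar>x powr s - y powr s\<bar> \<le> (3 powr s + 2 powr s) * t powr s" .
    have "y = y powr (5/2 - \<beta>) * y powr (\<beta> - 3/2)"
      using 3 by (simp add: powr_add[symmetric])
    also have "\<dots> \<le> (2 * t) powr (5/2 - \<beta>) * y powr (\<beta> - 3/2)"
      using 3 assms by (intro mult_right_mono powr_mono2) auto
    finally have Y: "y \<le> 2 powr (5/2 - \<beta>) * t powr (5/2 - \<beta>) * y powr (\<beta> - 3/2)"
      using 3 by (simp add: powr_mult)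
    have "?L \<le> t powr (2 * \<beta> - 5/2) * (2 powr (5/2 - \<beta>) * t powr (5/2 - \<beta>) * y powr (\<beta> - 3/2))
        * ((3 powr s + 2 powr s) * t powr s)"
      by (intro mult_mono mult_left_mono Y D) simp_all
    also have "\<dots> = (3 powr s + 2 powr s) * 2 powr (5/2 - \<beta>)
        * (t powr (2 * \<beta> - 5/2) * t powr (5/2 - \<beta>) * t powr s) * y powr (\<beta> - 3/2)"
      by (simp only: mult_ac)
    also have "\<dots> = ?B"
      by (simp add: powr_add[symmetric] add.commute)
    finally show ?thesis using \<open>?A \<ge> 0\<close> by linarith
  qed
qed

lemma product_kernel_le:
  fixes t y x s \<beta> :: real
  assumes "0 \<le> t" "0 < y" "0 \<le> x" "x \<le> t + y"
    and "1/2 < \<beta>" "\<beta> < 3/2" "\<beta> < s + 1"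
  shows "t powr (2 * \<beta> - 5/2) * x powr (s + 1 - \<beta>)
    \<le> 2 powr (s + 1 - \<beta>) * (t powr (- 3/2) * y powr (s + \<beta>) + t powr s * y powr (\<beta> - 3/2))"
    (is "?L \<le> ?K * (?A + ?B)")
proof -
  have "?K * ?A \<ge> 0" "?K * ?B \<ge> 0" by simp_all
  consider "t = 0" | "0 < t" "t \<le> y" | "0 < t" "y < t"
    using assms by linarith
  then show ?thesis
  proof cases
    case 1
    then show ?thesis using \<open>?K * ?A \<ge> 0\<close> \<open>?K * ?B \<ge> 0\<close> by (simp add: distrib_left)
  next
    case 2
    have "x powr (s + 1 - \<beta>) \<le> (2 * y) powr (s + 1 - \<beta>)"
      using 2 assms by (intro powr_mono2) auto
    then have X: "x powr (s + 1 - \<beta>) \<le> ?K * y powr (s + 1 - \<beta>)"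
      using assms by (simp add: powr_mult)
    have "t powr (2 * \<beta> - 5/2) = t powr (- 3/2) * t powr (2 * \<beta> - 1)"
      by (simp add: powr_add[symmetric])
    also have "\<dots> \<le> t powr (- 3/2) * y powr (2 * \<beta> - 1)"
      using 2 assms by (intro mult_left_mono powr_mono2) auto
    finally have "?L \<le> t powr (- 3/2) * y powr (2 * \<beta> - 1) * (?K * y powr (s + 1 - \<beta>))"
      using X by (intro mult_mono) simp_all
    also have "\<dots> = ?K * (t powr (- 3/2) * (y powr (2 * \<beta> - 1) * y powr (s + 1 - \<beta>)))"
      by (simp only: mult_ac)
    also have "y powr (2 * \<beta> - 1) * y powr (s + 1 - \<beta>) = y powr (s + \<beta>)"
      by (simp add: powr_add[symmetric] add.commute)
    finally show ?thesis using \<open>?K * ?B \<ge> 0\<close> unfolding distrib_left by linarith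
  next
    case 3
    have "x powr (s + 1 - \<beta>) \<le> (2 * t) powr (s + 1 - \<beta>)"
      using 3 assms by (intro powr_mono2) auto
    then have "?L \<le> t powr (2 * \<beta> - 5/2) * (?K * t powr (s + 1 - \<beta>))"
      using 3 by (intro mult_left_mono) (simp_all add: powr_mult)
    also have "\<dots> = ?K * (t powr s * (t powr (2 * \<beta> - 5/2) * t powr (s + 1 - \<beta>) / t powr s))"
      using 3 by simp
    also have "t powr (2 * \<beta> - 5/2) * t powr (s + 1 - \<beta>) / t powr s = t powr (\<beta> - 3/2)"
      by (simp add: powr_add[symmetric] powr_diff[symmetric])
    also have "t powr (\<beta> - 3/2) \<le> y powr (\<beta> - 3/2)"
      using 3 assms by (intro powr_mono2') auto
    finally have "?L \<le> ?K * (t powr s * y powr (\<beta> - 3/2))"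
      by (simp add: mult_left_mono)
    then show ?thesis using \<open>?K * ?A \<ge> 0\<close> unfolding distrib_left by linarith
  qed
qed

lemma commutator_triad_le:
  fixes s \<beta> :: real
  assumes "dfield v" "0 < s" "1/2 < \<beta>" "\<beta> < 3/2"
  shows "cmod (Btriad (Lam (2 * \<beta> - 5/2) w) v v (j, l))
      * (knorm (j + l) powr s * \<bar>knorm (j + l) powr s - knorm l powr s\<bar>)
    \<le> s * (2 powr \<bar>s - 1\<bar> + 1)
        * (knorm j powr - (s + 5/2 - 2 * \<beta>) * Vseq (s + 1) w j * Vseq s v l * Vseq s v (j + l))
      + (3 powr s + 2 powr s) * 2 powr (5/2 - \<beta>)
        * (Vseq (s + \<beta>) w j * knorm l powr - (s + 3/2) * Vseq (s + \<beta>) v l * Vseq s v (j + l))"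
proof -
  define t y x where "t = knorm j" and "y = knorm l" and "x = knorm (j + l)"
  define P where "P = norm (w j) * norm (v l) * norm (v (j + l)) * x powr s"
  have "P \<ge> 0" by (simp add: P_def)
  have "cmod (Btriad (Lam (2 * \<beta> - 5/2) w) v v (j, l)) * (x powr s * \<bar>x powr s - y powr s\<bar>)
      \<le> (t powr (2 * \<beta> - 5/2) * norm (w j) * y * norm (v l) * norm (v (j + l)))
        * (x powr s * \<bar>x powr s - y powr s\<bar>)"
    using norm_Btriad_le[of "Lam (2 * \<beta> - 5/2) w" v v j l]
    unfolding norm_Lam dfield_norm_uminus[OF assms(1)]
    by (intro mult_right_mono) (simp_all add: t_def y_def)
  also have "\<dots> = (t powr (2 * \<beta> - 5/2) * y * \<bar>x powr s - y powr s\<bar>) * P"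
    by (simp add: P_def mult_ac)
  also have "\<dots> \<le> (s * (2 powr \<bar>s - 1\<bar> + 1) * t powr (2 * \<beta> - 3/2) * y powr s
      + (3 powr s + 2 powr s) * 2 powr (5/2 - \<beta>) * t powr (s + \<beta>) * y powr (\<beta> - 3/2)) * P"
    by (intro mult_right_mono commutator_kernel_le \<open>P \<ge> 0\<close>)
      (use assms in \<open>simp_all add: t_def y_def x_def knorm_triangle knorm_triangle'\<close>)
  also have "t powr (2 * \<beta> - 3/2) = t powr - (s + 5/2 - 2 * \<beta>) * t powr (s + 1)"
    by (simp add: powr_add[symmetric])
  also have "y powr (\<beta> - 3/2) = y powr - (s + 3/2) * y powr (s + \<beta>)"
    by (simp add: powr_add[symmetric])
  finally show ?thesis
    by (simp add: P_def Vseq_def t_def y_def x_def algebra_simps)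
qed

lemma product_triad_le:
  fixes s \<beta> :: real
  assumes "dfield v" "dfield w" "1/2 < \<beta>" "\<beta> < 3/2" "\<beta> < s + 1"
  shows "cmod (Btriad (Lam (2 * \<beta> - 5/2) v) w (Lam (2 * s) v) (j, l))
    \<le> 2 powr (s + 1 - \<beta>)
      * (knorm j powr - (s + 3/2) * Vseq s v j * Vseq (s + \<beta>) w l * Vseq (s + \<beta>) v (j + l)
        + Vseq s v j * knorm l powr - (s + 3/2) * Vseq (s + \<beta>) w l * Vseq (s + \<beta>) v (j + l))"
proof (cases "l = 0")
  case True
  then show ?thesis
    using norm_Btriad_le[of "Lam (2 * \<beta> - 5/2) v" w "Lam (2 * s) v" j l]
    by (simp add: dfield_zero[OF assms(2)] zero_le_mult_iff)
next
  case False
  define t y x where "t = knorm j" and "y = knorm l" and "x = knorm (j + l)"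
  define P where "P = norm (v j) * norm (w l) * norm (v (j + l)) * x powr (s + \<beta>)"
  have "P \<ge> 0" by (simp add: P_def)
  have "cmod (Btriad (Lam (2 * \<beta> - 5/2) v) w (Lam (2 * s) v) (j, l))
      \<le> t powr (2 * \<beta> - 5/2) * norm (v j) * x * norm (w l) * (x powr (2 * s) * norm (v (j + l)))"
    using norm_Btriad_le_dfield[OF dfield_Lam[OF assms(1)], of "2 * \<beta> - 5/2" w "Lam (2 * s) v" j l]
    unfolding norm_Lam knorm_uminus dfield_norm_uminus[OF assms(1)]
    by (simp add: t_def x_def)
  also have "\<dots> = t powr (2 * \<beta> - 5/2) * (x * x powr (2 * s)) * (norm (v j) * norm (w l) * norm (v (j + l)))"
    by (simp only: mult_ac)
  also have "x * x powr (2 * s) = x powr (s + 1 - \<beta>) * x powr (s + \<beta>)"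
    by (simp add: x_def powr_mult_base powr_add[symmetric] add.commute add.left_commute)
  also have "t powr (2 * \<beta> - 5/2) * (x powr (s + 1 - \<beta>) * x powr (s + \<beta>)) * (norm (v j) * norm (w l) * norm (v (j + l)))
      = (t powr (2 * \<beta> - 5/2) * x powr (s + 1 - \<beta>)) * P"
    by (simp only: P_def mult_ac)
  also have "\<dots> \<le> 2 powr (s + 1 - \<beta>) * (t powr (- 3/2) * y powr (s + \<beta>) + t powr s * y powr (\<beta> - 3/2)) * P"
    by (intro mult_right_mono product_kernel_le \<open>P \<ge> 0\<close>)
      (use assms False in \<open>simp_all add: t_def y_def x_def knorm_triangle\<close>)
  also have "t powr (- 3/2) = t powr - (s + 3/2) * t powr s"
    by (simp add: powr_add[symmetric])
  also have "y powr (\<beta> - 3/2) = y powr - (s + 3/2) * y powr (s + \<beta>)"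
    by (simp add: powr_add[symmetric])
  finally show ?thesis
    by (simp add: P_def Vseq_def t_def y_def x_def algebra_simps)
qed

section \<open>Estimates of the trilinear form\<close>

lemma norm_Bpair_eq: "cmod (Bpair u v z) = (2 * pi) ^ 3 * cmod (infsum (Btriad u v z) UNIV)"
  unfolding Bpair_eq_infsum_Btriad norm_mult norm_of_real by simp

lemma norm_Bpair_le:
  assumes "\<And>p. cmod (Btriad u v z p) \<le> g p" and "\<And>F. finite F \<Longrightarrow> sum g F \<le> B"
  shows "cmod (Bpair u v z) \<le> (2 * pi) ^ 3 * B"
proof -
  have "cmod (infsum (Btriad u v z) UNIV) \<le> B"
    by (rule norm_infsum_le_if_finite_sums_le) (use assms in \<open>meson order.trans sum_mono\<close>)
  then show ?thesis
    by (simp add: norm_Bpair_eq)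
qed

text \<open>Splitting |j + l|^{2s} = |l|^s |j + l|^s + |j + l|^s (|j + l|^s - |l|^s), the symmetric part
  cancels under the involution (j, l) \<mapsto> (j, -(j + l)) because u is divergence free, so only
  the commutator part has to be estimated.\<close>
lemma norm_Bpair_Lam_le_commutator:
  fixes s B :: real
  assumes "dfield u"
    and bound: "\<And>F. finite F \<Longrightarrow> (\<Sum>(j, l)\<in>F. cmod (Btriad u v v (j, l))
                   * (knorm (j + l) powr s * \<bar>knorm (j + l) powr s - knorm l powr s\<bar>)) \<le> B"
  shows "cmod (Bpair u v (Lam (2 * s) v)) \<le> (2 * pi) ^ 3 * B"
proof -
  define \<tau> where "\<tau> = Btriad u v (Lam (2 * s) v)"
  define \<tau>\<^sub>s where "\<tau>\<^sub>s = (\<lambda>(j, l). Btriad u v v (j, l) * of_real (knorm l powr s * knorm (j + l) powr s))"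
  define \<delta> where "\<delta> = (\<lambda>(j, l). Btriad u v v (j, l)
    * of_real (knorm (j + l) powr s * (knorm (j + l) powr s - knorm l powr s)))"
  have \<tau>_split: "\<tau> p = \<tau>\<^sub>s p + \<delta> p" for p
  proof -
    obtain j l where p: "p = (j, l)" by (cases p)
    have "knorm (j + l) powr (2 * s) = knorm l powr s * knorm (j + l) powr s
        + knorm (j + l) powr s * (knorm (j + l) powr s - knorm l powr s)"
      by (simp add: algebra_simps powr_add[symmetric])
    then show ?thesis
      unfolding p \<tau>_def \<tau>\<^sub>s_def \<delta>_def Btriad_Lam_right by (simp add: distrib_left mult.commute)
  qed
  have "norm (\<delta> p) = (\<lambda>(j, l). cmod (Btriad u v v (j, l))
      * (knorm (j + l) powr s * \<bar>knorm (j + l) powr s - knorm l powr s\<bar>)) p" for p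
    by (cases p) (simp only: \<delta>_def prod.case norm_mult norm_of_real abs_mult, simp)
  then have \<delta>_le: "(\<Sum>p\<in>F. norm (\<delta> p)) \<le> B" if "finite F" for F
    using bound[OF that] by (simp only:)
  have "B \<ge> 0" using bound[of "{}"] by simp
  have "\<delta> summable_on UNIV"
    by (rule abs_summable_summable, rule summable_on_if_finite_sums_le) (use \<delta>_le in auto)
  have "infsum \<tau>\<^sub>s UNIV = 0"
  proof (rule infsum_eq_0_if_involution_negates)
    show "(\<lambda>(j, l). (j, - (j + l))) ((\<lambda>(j, l). (j, - (j + l))) p) = p" for p :: "(int ^ 3) \<times> (int ^ 3)"
      by (cases p) simp
    have "Btriad u v v (j, - j - l) = - Btriad u v v (j, l)" for j l
      using Btriad_antisym[OF assms(1), of v j l] by simp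
    then show "\<tau>\<^sub>s ((\<lambda>(j, l). (j, - (j + l))) p) = - \<tau>\<^sub>s p" for p
      by (cases p) (simp add: \<tau>\<^sub>s_def knorm_uminus[of "_ + _", simplified])
  qed
  have "cmod (infsum \<tau> UNIV) \<le> B"
  proof (cases "\<tau> summable_on UNIV")
    case True
    then have "(\<lambda>p. \<tau> p + - \<delta> p) summable_on UNIV"
      using \<open>\<delta> summable_on UNIV\<close> by (intro summable_on_add) (simp_all add: summable_on_uminus)
    then have "\<tau>\<^sub>s summable_on UNIV" by (simp add: \<tau>_split)
    then have "infsum \<tau> UNIV = infsum \<tau>\<^sub>s UNIV + infsum \<delta> UNIV"
      unfolding \<tau>_split using \<open>\<delta> summable_on UNIV\<close> by (rule infsum_add)
    then have "infsum \<tau> UNIV = infsum \<delta> UNIV"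
      using \<open>infsum \<tau>\<^sub>s UNIV = 0\<close> by simp
    then show ?thesis
      using norm_infsum_le_if_finite_sums_le[OF \<delta>_le] by simp
  next
    case False
    then show ?thesis using \<open>B \<ge> 0\<close> by (simp add: infsum_not_exists)
  qed
  then show ?thesis
    by (simp add: norm_Bpair_eq \<tau>_def)
qed

lemma Bpair_commutator_estimate:
  fixes s \<beta> :: real
  assumes "0 < s" "1/2 < \<beta>" "\<beta> < 3/2" "2 * \<beta> < s + 1"
  obtains C where "C \<ge> 0"
    and "\<And>v w. dfield v \<Longrightarrow> dfield w \<Longrightarrow> finV (s + 1) w \<Longrightarrow> finV s v \<Longrightarrow> finV (s + \<beta>) w
      \<Longrightarrow> finV (s + \<beta>) v \<Longrightarrow> cmod (Bpair (Lam (2 * \<beta> - 5/2) w) v (Lam (2 * s) v))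
        \<le> C * (Vnorm (s + 1) w * Vnorm s v + Vnorm (s + \<beta>) w * Vnorm (s + \<beta>) v) * Vnorm s v"
proof -
  define K\<^sub>1 K\<^sub>2 where "K\<^sub>1 = s * (2 powr \<bar>s - 1\<bar> + 1)" and "K\<^sub>2 = (3 powr s + 2 powr s) * 2 powr (5/2 - \<beta>)"
  define W\<^sub>1 W\<^sub>2 where "W\<^sub>1 = (\<lambda>k. knorm k powr - (s + 5/2 - 2 * \<beta>))" and "W\<^sub>2 = (\<lambda>k. knorm k powr - (s + 3/2))"
  define C where "C = (2 * pi) ^ 3 * (K\<^sub>1 * l2_norm W\<^sub>1 + K\<^sub>2 * l2_norm W\<^sub>2)"
  have K: "K\<^sub>1 \<ge> 0" "K\<^sub>2 \<ge> 0" using assms by (simp_all add: K\<^sub>1_def K\<^sub>2_def)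
  have W: "square_summable W\<^sub>1" "square_summable W\<^sub>2"
    unfolding W\<^sub>1_def W\<^sub>2_def by (rule square_summable_knorm_powr, use assms in simp)+
  have "C \<ge> 0" using K by (simp add: C_def l2_norm_nonneg)
  moreover have "cmod (Bpair (Lam (2 * \<beta> - 5/2) w) v (Lam (2 * s) v))
      \<le> C * (Vnorm (s + 1) w * Vnorm s v + Vnorm (s + \<beta>) w * Vnorm (s + \<beta>) v) * Vnorm s v"
    if v: "dfield v" and w: "dfield w" and fin: "finV (s + 1) w" "finV s v" "finV (s + \<beta>) w" "finV (s + \<beta>) v"
    for v w
  proof -
    note fin = fin[unfolded finV_iff_square_summable]
    define S\<^sub>1 where "S\<^sub>1 = (\<lambda>(j, l). W\<^sub>1 j * Vseq (s + 1) w j * Vseq s v l * Vseq s v (j + l))"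
    define S\<^sub>2 where "S\<^sub>2 = (\<lambda>(j, l). Vseq (s + \<beta>) w j * W\<^sub>2 l * Vseq (s + \<beta>) v l * Vseq s v (j + l))"
    define M\<^sub>1 where "M\<^sub>1 = l2_norm W\<^sub>1 * l2_norm (Vseq (s + 1) w) * l2_norm (Vseq s v) * l2_norm (Vseq s v)"
    define M\<^sub>2 where "M\<^sub>2 = l2_norm W\<^sub>2 * l2_norm (Vseq (s + \<beta>) w) * l2_norm (Vseq (s + \<beta>) v) * l2_norm (Vseq s v)"
    have "cmod (Bpair (Lam (2 * \<beta> - 5/2) w) v (Lam (2 * s) v)) \<le> (2 * pi) ^ 3 * (K\<^sub>1 * M\<^sub>1 + K\<^sub>2 * M\<^sub>2)"
    proof (rule norm_Bpair_Lam_le_commutator[OF dfield_Lam[OF w]])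
      fix F :: "((int ^ 3) \<times> (int ^ 3)) set"
      assume "finite F"
      have "(\<Sum>(j, l)\<in>F. cmod (Btriad (Lam (2 * \<beta> - 5/2) w) v v (j, l))
          * (knorm (j + l) powr s * \<bar>knorm (j + l) powr s - knorm l powr s\<bar>))
          \<le> (\<Sum>p\<in>F. K\<^sub>1 * S\<^sub>1 p + K\<^sub>2 * S\<^sub>2 p)"
        by (intro sum_mono, simp only: split_paired_all prod.case S\<^sub>1_def S\<^sub>2_def K\<^sub>1_def K\<^sub>2_def W\<^sub>1_def W\<^sub>2_def)
          (rule commutator_triad_le[OF v assms(1-3)])
      also have "\<dots> = K\<^sub>1 * sum S\<^sub>1 F + K\<^sub>2 * sum S\<^sub>2 F"
        by (simp add: sum.distrib sum_distrib_left)
      also have "\<dots> \<le> K\<^sub>1 * M\<^sub>1 + K\<^sub>2 * M\<^sub>2"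
        unfolding S\<^sub>1_def S\<^sub>2_def M\<^sub>1_def M\<^sub>2_def
        by (intro add_mono mult_left_mono K sum_convolution_le_l2_norms sum_convolution_le_l2_norms'
            W fin \<open>finite F\<close>) (simp_all add: W\<^sub>1_def W\<^sub>2_def)
      finally show "(\<Sum>(j, l)\<in>F. cmod (Btriad (Lam (2 * \<beta> - 5/2) w) v v (j, l))
          * (knorm (j + l) powr s * \<bar>knorm (j + l) powr s - knorm l powr s\<bar>)) \<le> K\<^sub>1 * M\<^sub>1 + K\<^sub>2 * M\<^sub>2" .
    qed
    also have "\<dots> \<le> C * (Vnorm (s + 1) w * Vnorm s v + Vnorm (s + \<beta>) w * Vnorm (s + \<beta>) v) * Vnorm s v"
      using K by (simp add: C_def M\<^sub>1_def M\<^sub>2_def Vnorm_eq_l2_norm l2_norm_nonneg algebra_simps)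
    finally show ?thesis .
  qed
  ultimately show ?thesis using that by blast
qed

lemma Bpair_product_estimate:
  fixes s \<beta> :: real
  assumes "0 < s" "1/2 < \<beta>" "\<beta> < 3/2" "\<beta> < s + 1"
  obtains C where "C \<ge> 0"
    and "\<And>v w. dfield v \<Longrightarrow> dfield w \<Longrightarrow> finV s v \<Longrightarrow> finV (s + \<beta>) w \<Longrightarrow> finV (s + \<beta>) v
      \<Longrightarrow> cmod (Bpair (Lam (2 * \<beta> - 5/2) v) w (Lam (2 * s) v))
        \<le> C * Vnorm s v * Vnorm (s + \<beta>) w * Vnorm (s + \<beta>) v"
proof -
  define K where "K = 2 powr (s + 1 - \<beta>)"
  define W where "W = (\<lambda>k. knorm k powr - (s + 3/2))"
  define C where "C = (2 * pi) ^ 3 * (K * (2 * l2_norm W))"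
  have "square_summable W"
    unfolding W_def by (rule square_summable_knorm_powr) (use assms in simp)
  have "C \<ge> 0" by (simp add: C_def K_def l2_norm_nonneg)
  moreover have "cmod (Bpair (Lam (2 * \<beta> - 5/2) v) w (Lam (2 * s) v))
      \<le> C * Vnorm s v * Vnorm (s + \<beta>) w * Vnorm (s + \<beta>) v"
    if v: "dfield v" and w: "dfield w" and fin: "finV s v" "finV (s + \<beta>) w" "finV (s + \<beta>) v" for v w
  proof -
    note fin = fin[unfolded finV_iff_square_summable]
    define T\<^sub>1 where "T\<^sub>1 = (\<lambda>(j, l). W j * Vseq s v j * Vseq (s + \<beta>) w l * Vseq (s + \<beta>) v (j + l))"
    define T\<^sub>2 where "T\<^sub>2 = (\<lambda>(j, l). Vseq s v j * W l * Vseq (s + \<beta>) w l * Vseq (s + \<beta>) v (j + l))"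
    define M where "M = l2_norm W * l2_norm (Vseq s v) * l2_norm (Vseq (s + \<beta>) w) * l2_norm (Vseq (s + \<beta>) v)"
    have "cmod (Bpair (Lam (2 * \<beta> - 5/2) v) w (Lam (2 * s) v)) \<le> (2 * pi) ^ 3 * (K * (M + M))"
    proof (rule norm_Bpair_le)
      show "cmod (Btriad (Lam (2 * \<beta> - 5/2) v) w (Lam (2 * s) v) p) \<le> K * (T\<^sub>1 p + T\<^sub>2 p)" for p
        by (cases p, simp only: prod.case T\<^sub>1_def T\<^sub>2_def K_def W_def) (rule product_triad_le[OF v w assms(2-4)])
      show "sum (\<lambda>p. K * (T\<^sub>1 p + T\<^sub>2 p)) F \<le> K * (M + M)" if "finite F" for F
        unfolding sum_distrib_left[symmetric] sum.distrib T\<^sub>1_def T\<^sub>2_def M_def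
        by (intro mult_left_mono add_mono sum_convolution_le_l2_norms sum_convolution_le_l2_norms'
            \<open>square_summable W\<close> fin that) (simp_all add: W_def K_def)
    qed
    then show ?thesis
      by (simp add: C_def M_def Vnorm_eq_l2_norm algebra_simps)
  qed
  ultimately show ?thesis using that by blast
qed

theorem lemma14:
  fixes \<alpha> \<beta> r :: real
  assumes "1/2 < \<beta>" and "\<beta> < 5/4" and "\<alpha> + \<beta> = 5/4"
    and "r > max (2 * \<beta>) (2 - \<beta>)"
  shows "\<exists>C>0.
    (\<forall>v w. dfield v \<and> dfield w \<and> finV r w \<and> finV (r - 1) v \<and> finV (r + \<beta> - 1) w
        \<and> finV (r + \<beta> - 1) v \<longrightarrow>
       cmod (Bpair (Lam (-2 * \<alpha>) w) v (Lam (2 * r - 2) v))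
         \<le> C * (Vnorm r w * Vnorm (r - 1) v + Vnorm (r + \<beta> - 1) w * Vnorm (r + \<beta> - 1) v)
             * Vnorm (r - 1) v)
  \<and> (\<forall>v w. dfield v \<and> dfield w \<and> finV (r - 1) v \<and> finV (r + \<beta> - 1) w
        \<and> finV (r + \<beta> - 1) v \<longrightarrow>
       cmod (Bpair (Lam (-2 * \<alpha>) v) w (Lam (2 * r - 2) v))
         \<le> C * Vnorm (r - 1) v * Vnorm (r + \<beta> - 1) w * Vnorm (r + \<beta> - 1) v)"
proof -
  have exps: "-2 * \<alpha> = 2 * \<beta> - 5/2" "2 * r - 2 = 2 * (r - 1)" "r = (r - 1) + 1" "r + \<beta> - 1 = (r - 1) + \<beta>"
    using assms(3) by simp_all
  obtain C\<^sub>1 where "C\<^sub>1 \<ge> 0" and E\<^sub>1: "\<And>v w. dfield v \<Longrightarrow> dfield w \<Longrightarrow> finV ((r - 1) + 1) w \<Longrightarrow> finV (r - 1) v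
      \<Longrightarrow> finV ((r - 1) + \<beta>) w \<Longrightarrow> finV ((r - 1) + \<beta>) v \<Longrightarrow>
      cmod (Bpair (Lam (2 * \<beta> - 5/2) w) v (Lam (2 * (r - 1)) v))
      \<le> C\<^sub>1 * (Vnorm ((r - 1) + 1) w * Vnorm (r - 1) v + Vnorm ((r - 1) + \<beta>) w * Vnorm ((r - 1) + \<beta>) v) * Vnorm (r - 1) v"
    by (rule Bpair_commutator_estimate[of "r - 1" \<beta>]) (use assms in auto)
  obtain C\<^sub>2 where "C\<^sub>2 \<ge> 0" and E\<^sub>2: "\<And>v w. dfield v \<Longrightarrow> dfield w \<Longrightarrow> finV (r - 1) v \<Longrightarrow> finV ((r - 1) + \<beta>) w
      \<Longrightarrow> finV ((r - 1) + \<beta>) v \<Longrightarrow> cmod (Bpair (Lam (2 * \<beta> - 5/2) v) w (Lam (2 * (r - 1)) v))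
        \<le> C\<^sub>2 * Vnorm (r - 1) v * Vnorm ((r - 1) + \<beta>) w * Vnorm ((r - 1) + \<beta>) v"
    by (rule Bpair_product_estimate[of "r - 1" \<beta>]) (use assms in auto)
  define C where "C = max C\<^sub>1 C\<^sub>2 + 1"
  have "C > 0" "C\<^sub>1 \<le> C" "C\<^sub>2 \<le> C" using \<open>C\<^sub>1 \<ge> 0\<close> \<open>C\<^sub>2 \<ge> 0\<close> by (auto simp: C_def)
  have Vnorm_nonneg: "Vnorm a u \<ge> 0" for a u by (simp add: Vnorm_eq_l2_norm l2_norm_nonneg)
  note E\<^sub>1 = E\<^sub>1[unfolded exps[symmetric]] and E\<^sub>2 = E\<^sub>2[unfolded exps[symmetric]]
  show ?thesis
    by (intro exI[of _ C] conjI allI impI \<open>C > 0\<close> order.trans[OF E\<^sub>1] order.trans[OF E\<^sub>2])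
      (auto intro!: mult_right_mono \<open>C\<^sub>1 \<le> C\<close> \<open>C\<^sub>2 \<le> C\<close> simp: Vnorm_nonneg)
qed

end
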